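(* Let $\phi:[0,1]\to\mathbb R$ be H\"older continuous with exponent $\gamma\in(0,1]$, $\phi(0)=\phi(1)$, and suppose $\phi$ is a valid base function for $b\in\{2,3,\dots\}$ and $\alpha\in(b^{-\gamma},1)$. If $0<\beta<b^{-\gamma}$, then $\psi(t):=\sum_{m=0}^\infty\beta^m\phi(\{b^mt\})$, $t\in[0,1]$, is also a valid base function for $b$ and $\alpha$.
   Context: $\{x\}$ denotes the fractional part of $x\ge0$. $U_1,U_2,\dots$ are i.i.d. uniform on $\{0,1,\dots,b-1\}$ and $R_m:=\sum_{i=1}^mU_ib^{i-1}$. Definition: a function $\phi:[0,1]\to\mathbb R$ that is H\"older continuous with exponent $\gamma\in(0,1]$ and satisfies $\phi(0)=\phi(1)$ is called a valid base function for $b$ and $\alpha$ (where $\alpha b^\gamma>1$, $\alpha<1$) if the random variable $Z:=\sum_{m=1}^\infty\alpha^{-m}\big(\phi((R_m+1)b^{-m})-\phi(R_mb^{-m})\big)$ is not almost surely equal to $0$. *)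

theory Defs
  imports "HOL-Probability.Probability"
begin

definition holder_on_unit :: "real \<Rightarrow> (real \<Rightarrow> real) \<Rightarrow> bool" where
  "holder_on_unit \<gamma> \<phi> \<longleftrightarrow>
     (\<exists>C. \<forall>x\<in>{0..1}. \<forall>y\<in>{0..1}. \<bar>\<phi> x - \<phi> y\<bar> \<le> C * \<bar>x - y\<bar> powr \<gamma>)"

text \<open>Probability space of i.i.d. digits U_1, U_2, ... uniform on {0,...,b-1}
  (coordinate omega i is U_i; coordinate 0 is unused).\<close>
definition digit_space :: "nat \<Rightarrow> (nat \<Rightarrow> nat) measure" where
  "digit_space b = PiM UNIV (\<lambda>_::nat. measure_pmf (pmf_of_set {0..<b}))"

definition R_digits :: "nat \<Rightarrow> nat \<Rightarrow> (nat \<Rightarrow> nat) \<Rightarrow> nat" where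
  "R_digits b m \<omega> = (\<Sum>i=1..m. \<omega> i * b ^ (i - 1))"

definition Z_var :: "nat \<Rightarrow> real \<Rightarrow> (real \<Rightarrow> real) \<Rightarrow> (nat \<Rightarrow> nat) \<Rightarrow> real" where
  "Z_var b \<alpha> \<phi> \<omega> =
     (\<Sum>m. (inverse \<alpha>) ^ (Suc m) *
        (\<phi> ((real (R_digits b (Suc m) \<omega>) + 1) / real b ^ Suc m)
         - \<phi> (real (R_digits b (Suc m) \<omega>) / real b ^ Suc m)))"

definition valid_base_function :: "nat \<Rightarrow> real \<Rightarrow> (real \<Rightarrow> real) \<Rightarrow> bool" where
  "valid_base_function b \<alpha> \<phi> \<longleftrightarrow>
     (\<exists>\<gamma>. 0 < \<gamma> \<and> \<gamma> \<le> 1 \<and> holder_on_unit \<gamma> \<phi> \<and> \<phi> 0 = \<phi> 1 \<and>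
          \<alpha> * real b powr \<gamma> > 1 \<and> \<alpha> < 1 \<and>
          \<not> (AE \<omega> in digit_space b. Z_var b \<alpha> \<phi> \<omega> = 0))"

end

theory Submission
  imports Defs
begin

text \<open>
  Write psi for the lacunary series and D_n f for the increment of f over the level-n b-adic
  interval [R_n / b^n, (R_n + 1) / b^n] selected by the digits.  Multiplication by b^k modulo 1
  maps this interval onto the level-(n - k) interval of the same digits when k < n, and onto
  integers otherwise; since phi 0 = phi 1 this gives D_n psi = (sum over k < n of beta^k D_(n-k) phi).
  Weighting by alpha^(-n) and summing, a Cauchy product yields Z_psi = Z_phi / (1 - beta / alpha),
  so Z_psi is not almost surely 0 either.  Hoelder continuity of psi follows from that of the
  1-periodic extension of phi, summed against the geometric factor (beta b^gamma)^m.
\<close>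

lemma R_digits_Suc: "R_digits b (Suc n) \<omega> = R_digits b n \<omega> + \<omega> (Suc n) * b ^ n"
  by (simp add: R_digits_def sum.cl_ivl_Suc)

lemma R_digits_less:
  assumes "\<And>i. \<omega> i < b"
  shows "R_digits b n \<omega> < b ^ n"
proof (induction n)
  case 0
  show ?case by (simp add: R_digits_def)
next
  case (Suc n)
  have "\<omega> (Suc n) * b ^ n \<le> (b - 1) * b ^ n"
    using assms[of "Suc n"] by simp
  with Suc.IH have "R_digits b (Suc n) \<omega> < b ^ n + (b - 1) * b ^ n"
    unfolding R_digits_Suc by linarith
  also have "\<dots> = b ^ Suc n"
    using assms[of 0] by (cases b) auto
  finally show ?case .
qed

lemma R_digits_add: "\<exists>S. R_digits b (j + k) \<omega> = R_digits b j \<omega> + b ^ j * S"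
proof (induction k)
  case 0
  show ?case by simp
next
  case (Suc k)
  then obtain S where "R_digits b (j + k) \<omega> = R_digits b j \<omega> + b ^ j * S"
    by blast
  then show ?case
    by (intro exI[of _ "S + \<omega> (Suc (j + k)) * b ^ k"]) (simp add: R_digits_Suc power_add algebra_simps)
qed

definition digit_increment :: "nat \<Rightarrow> (real \<Rightarrow> real) \<Rightarrow> nat \<Rightarrow> (nat \<Rightarrow> nat) \<Rightarrow> real" where
  "digit_increment b \<phi> n \<omega> =
     \<phi> ((real (R_digits b n \<omega>) + 1) / real b ^ n) - \<phi> (real (R_digits b n \<omega>) / real b ^ n)"

lemma Z_var_eq_suminf_digit_increment:
  "Z_var b \<alpha> \<phi> \<omega> = (\<Sum>m. inverse \<alpha> ^ Suc m * digit_increment b \<phi> (Suc m) \<omega>)"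
  by (simp add: Z_var_def digit_increment_def)

lemma frac_shift_digit_increment:
  fixes \<phi> :: "real \<Rightarrow> real"
  assumes digits: "\<And>i. \<omega> i < b" and "\<phi> 0 = \<phi> 1"
  shows "\<phi> (frac (real b ^ k * ((real (R_digits b (j + k) \<omega>) + 1) / real b ^ (j + k))))
         - \<phi> (frac (real b ^ k * (real (R_digits b (j + k) \<omega>) / real b ^ (j + k))))
       = digit_increment b \<phi> j \<omega>"
proof -
  define r where "r = R_digits b j \<omega>"
  have b: "b > 0"
    using digits[of 0] by simp
  obtain S where S: "R_digits b (j + k) \<omega> = r + b ^ j * S"
    using R_digits_add unfolding r_def by blast
  have "r < b ^ j"
    unfolding r_def using digits by (rule R_digits_less)
  then have r: "real r + 1 \<le> real b ^ j"
    by (metis Suc_leI of_nat_Suc of_nat_le_iff of_nat_power add.commute)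
  have shift: "real b ^ k * ((real (R_digits b (j + k) \<omega>) + x) / real b ^ (j + k))
      = real S + (real r + x) / real b ^ j" for x
    using b by (simp add: S power_add field_simps)
  have frac_shift: "frac (real S + y) = frac y" for y
    by (simp add: frac_add_int_left)
  then have lower: "frac (real b ^ k * (real (R_digits b (j + k) \<omega>) / real b ^ (j + k)))
      = real r / real b ^ j"
    using shift[of 0] \<open>r < b ^ j\<close> b by (simp add: frac_eq)
  \<comment> \<open>the upper end point is \<open>1\<close> when \<open>r + 1 = b ^ j\<close>, and then \<open>frac\<close> maps it to \<open>0\<close>\<close>
  have upper: "\<phi> (frac (real b ^ k * ((real (R_digits b (j + k) \<omega>) + 1) / real b ^ (j + k))))
      = \<phi> ((real r + 1) / real b ^ j)"
  proof (cases "real r + 1 = real b ^ j")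
    case True
    have integer: "frac (real S + 1) = 0"
      by (metis Ints_1 Ints_add Ints_of_nat frac_eq_0_iff)
    have at_integer: "real b ^ k * ((real (R_digits b (j + k) \<omega>) + 1) / real b ^ (j + k)) = real S + 1"
      using shift[of 1] True b by simp
    have "\<phi> (frac (real b ^ k * ((real (R_digits b (j + k) \<omega>) + 1) / real b ^ (j + k)))) = \<phi> 1"
      unfolding at_integer integer using \<open>\<phi> 0 = \<phi> 1\<close> .
    with True b show ?thesis
      by simp
  next
    case False
    then show ?thesis
      using shift[of 1] r b frac_shift by (simp add: frac_eq)
  qed
  show ?thesis
    using lower upper by (simp add: digit_increment_def r_def)
qed

lemma frac_power_mult_divide_power:
  assumes "n \<le> k" and "b > 0"
  shows "frac (real b ^ k * (real N / real b ^ n)) = 0"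
proof -
  have "real b ^ k = real b ^ (k - n) * real b ^ n"
    using assms(1) by (simp flip: power_add)
  then have "real b ^ k * (real N / real b ^ n) = real (b ^ (k - n) * N)"
    using assms(2) by simp
  then show ?thesis
    by simp
qed

lemma holder_frac:
  fixes \<phi> :: "real \<Rightarrow> real"
  assumes H: "\<forall>x\<in>{0..1}. \<forall>y\<in>{0..1}. \<bar>\<phi> x - \<phi> y\<bar> \<le> C * \<bar>x - y\<bar> powr \<gamma>"
    and "\<phi> 0 = \<phi> 1" and "0 < \<gamma>"
  shows "\<bar>\<phi> (frac u) - \<phi> (frac v)\<bar> \<le> 2 * C * \<bar>u - v\<bar> powr \<gamma>"
proof -
  have Hfrac: "\<bar>\<phi> x - \<phi> y\<bar> \<le> C * \<bar>x - y\<bar> powr \<gamma>" if "x \<in> {0..1}" "y \<in> {0..1}" for x y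
    using H that by blast
  have C: "C \<ge> 0"
    using Hfrac[of 0 1] by simp
  have frac01: "frac x \<in> {0..1}" for x
    using frac_lt_1[of x] by auto
  have "\<bar>\<phi> (frac u) - \<phi> (frac v)\<bar> \<le> 2 * C * (v - u) powr \<gamma>" if uv: "u \<le> v" for u v
  proof (cases "v - u \<ge> 1")
    case True
    have "\<bar>\<phi> (frac u) - \<phi> (frac v)\<bar> \<le> C * \<bar>frac u - frac v\<bar> powr \<gamma>"
      using Hfrac frac01 by blast
    also have "\<dots> \<le> C * 1"
    proof -
      have "\<bar>frac u - frac v\<bar> \<le> 1"
        using frac_ge_0[of u] frac_ge_0[of v] frac_lt_1[of u] frac_lt_1[of v] by linarith
      then show ?thesis
        using C \<open>0 < \<gamma>\<close> by (intro mult_left_mono powr_le1) auto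
    qed
    also have "\<dots> \<le> 2 * C * (v - u) powr \<gamma>"
    proof -
      have "1 \<le> (v - u) powr \<gamma>"
        using True \<open>0 < \<gamma>\<close> by (intro ge_one_powr_ge_zero) auto
      then have "C * 1 \<le> C * (v - u) powr \<gamma>"
        using C by (rule mult_left_mono)
      also have "\<dots> \<le> 2 * C * (v - u) powr \<gamma>"
        using C by simp
      finally show ?thesis .
    qed
    finally show ?thesis .
  next
    case False
    have "\<lfloor>u\<rfloor> \<le> \<lfloor>v\<rfloor>" "\<lfloor>v\<rfloor> \<le> \<lfloor>u\<rfloor> + 1"
      using uv False floor_mono by linarith+
    then consider "\<lfloor>v\<rfloor> = \<lfloor>u\<rfloor>" | "\<lfloor>v\<rfloor> = \<lfloor>u\<rfloor> + 1" by linarith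
    then show ?thesis
    proof cases
      case 1
      then have "\<bar>frac u - frac v\<bar> = v - u"
        using uv by (simp add: frac_def)
      then have "\<bar>\<phi> (frac u) - \<phi> (frac v)\<bar> \<le> C * (v - u) powr \<gamma>"
        using Hfrac frac01 by metis
      also have "\<dots> \<le> 2 * C * (v - u) powr \<gamma>"
        using C by simp
      finally show ?thesis .
    next
      case 2
      \<comment> \<open>the interval crosses an integer: pass through the glued point \<open>\<phi> 1 = \<phi> 0\<close>\<close>
      have "\<bar>frac u - 1\<bar> \<le> v - u" "\<bar>0 - frac v\<bar> \<le> v - u"
        using 2 frac_lt_1[of u] by (simp_all add: frac_def) linarith+
      then have "C * \<bar>frac u - 1\<bar> powr \<gamma> \<le> C * (v - u) powr \<gamma>"
          "C * \<bar>0 - frac v\<bar> powr \<gamma> \<le> C * (v - u) powr \<gamma>"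
        using C \<open>0 < \<gamma>\<close> by (intro mult_left_mono powr_mono2; simp)+
      moreover have "\<bar>\<phi> (frac u) - \<phi> 1\<bar> \<le> C * \<bar>frac u - 1\<bar> powr \<gamma>"
        "\<bar>\<phi> 0 - \<phi> (frac v)\<bar> \<le> C * \<bar>0 - frac v\<bar> powr \<gamma>"
        by (intro Hfrac frac01; simp)+
      ultimately show ?thesis
        using \<open>\<phi> 0 = \<phi> 1\<close> by linarith
    qed
  qed
  from this[of u v] this[of v u] show ?thesis
    by (cases "u \<le> v") (simp_all add: abs_minus_commute)
qed

lemma holder_bounded:
  fixes \<phi> :: "real \<Rightarrow> real"
  assumes H: "\<forall>x\<in>{0..1}. \<forall>y\<in>{0..1}. \<bar>\<phi> x - \<phi> y\<bar> \<le> C * \<bar>x - y\<bar> powr \<gamma>"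
    and "0 < \<gamma>" and "x \<in> {0..1}"
  shows "\<bar>\<phi> x\<bar> \<le> \<bar>\<phi> 0\<bar> + C"
proof -
  have "C \<ge> 0"
    using H[rule_format, of 0 1] by simp
  have "\<bar>\<phi> x - \<phi> 0\<bar> \<le> C * \<bar>x - 0\<bar> powr \<gamma>"
    using H[rule_format, of x 0] assms(3) by simp
  also have "\<dots> \<le> C * 1"
    using assms(2,3) \<open>C \<ge> 0\<close> by (intro mult_left_mono powr_le1) auto
  finally show ?thesis
    by linarith
qed

definition lacunary_series :: "nat \<Rightarrow> real \<Rightarrow> (real \<Rightarrow> real) \<Rightarrow> real \<Rightarrow> real" where
  "lacunary_series b \<beta> \<phi> t = (\<Sum>m. \<beta> ^ m * \<phi> (frac (real b ^ m * t)))"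

lemma summable_lacunary_series:
  fixes \<phi> :: "real \<Rightarrow> real"
  assumes "\<forall>x\<in>{0..1}. \<bar>\<phi> x\<bar> \<le> M" and "\<bar>\<beta>\<bar> < 1"
  shows "summable (\<lambda>m. \<beta> ^ m * \<phi> (frac (real b ^ m * t)))"
proof (rule summable_comparison_test')
  show "summable (\<lambda>m. \<bar>\<beta>\<bar> ^ m * M)"
    using assms(2) by (intro summable_mult2 summable_geometric) auto
  have "\<bar>\<phi> (frac x)\<bar> \<le> M" for x
    using assms(1) frac_lt_1[of x] by auto
  then show "norm (\<beta> ^ m * \<phi> (frac (real b ^ m * t))) \<le> \<bar>\<beta>\<bar> ^ m * M" for m
    by (simp add: abs_mult power_abs mult_left_mono)
qed

lemma holder_on_unit_lacunary_series:
  fixes \<phi> :: "real \<Rightarrow> real"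
  assumes H: "\<forall>x\<in>{0..1}. \<forall>y\<in>{0..1}. \<bar>\<phi> x - \<phi> y\<bar> \<le> C * \<bar>x - y\<bar> powr \<gamma>"
    and "\<phi> 0 = \<phi> 1" and "0 < \<gamma>" and "0 \<le> \<beta>" and "\<beta> * real b powr \<gamma> < 1" and "b > 0"
  shows "holder_on_unit \<gamma> (lacunary_series b \<beta> \<phi>)"
proof -
  define r where "r = \<beta> * real b powr \<gamma>"
  have r: "0 \<le> r" "r < 1"
    using assms(4,5) by (simp_all add: r_def)
  have "1 \<le> real b powr \<gamma>"
    using assms(3,6) by (intro ge_one_powr_ge_zero) auto
  then have "\<beta> \<le> \<beta> * real b powr \<gamma>"
    using assms(4) by (metis mult_left_mono mult.right_neutral)
  then have "\<beta> < 1"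
    using assms(5) by linarith
  have summable: "summable (\<lambda>m. \<beta> ^ m * \<phi> (frac (real b ^ m * t)))" for t
    using holder_bounded[OF H \<open>0 < \<gamma>\<close>] \<open>0 \<le> \<beta>\<close> \<open>\<beta> < 1\<close>
    by (intro summable_lacunary_series[where M = "\<bar>\<phi> 0\<bar> + C"]) auto
  have "\<bar>lacunary_series b \<beta> \<phi> x - lacunary_series b \<beta> \<phi> y\<bar> \<le> 2 * C / (1 - r) * \<bar>x - y\<bar> powr \<gamma>"
    for x y
  proof -
    have term_bound: "\<bar>\<beta> ^ m * (\<phi> (frac (real b ^ m * x)) - \<phi> (frac (real b ^ m * y)))\<bar>
        \<le> 2 * C * \<bar>x - y\<bar> powr \<gamma> * r ^ m" for m
    proof -
      have "(real b ^ m) powr \<gamma> = (real b powr \<gamma>) ^ m"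
        using \<open>b > 0\<close> by (simp add: powr_power powr_realpow[symmetric] powr_powr mult.commute)
      then have scale: "\<bar>real b ^ m * x - real b ^ m * y\<bar> powr \<gamma> = (real b powr \<gamma>) ^ m * \<bar>x - y\<bar> powr \<gamma>"
        by (simp add: abs_mult powr_mult flip: right_diff_distrib)
      have "\<bar>\<beta> ^ m * (\<phi> (frac (real b ^ m * x)) - \<phi> (frac (real b ^ m * y)))\<bar>
          = \<beta> ^ m * \<bar>\<phi> (frac (real b ^ m * x)) - \<phi> (frac (real b ^ m * y))\<bar>"
        using \<open>0 \<le> \<beta>\<close> by (simp add: abs_mult)
      also have "\<dots> \<le> \<beta> ^ m * (2 * C * \<bar>real b ^ m * x - real b ^ m * y\<bar> powr \<gamma>)"
        using \<open>0 \<le> \<beta>\<close> holder_frac[OF H \<open>\<phi> 0 = \<phi> 1\<close> \<open>0 < \<gamma>\<close>] by (intro mult_left_mono) auto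
      also have "\<dots> = 2 * C * \<bar>x - y\<bar> powr \<gamma> * r ^ m"
        unfolding scale r_def by (simp add: power_mult_distrib)
      finally show ?thesis .
    qed
    have "lacunary_series b \<beta> \<phi> x - lacunary_series b \<beta> \<phi> y
        = (\<Sum>m. \<beta> ^ m * (\<phi> (frac (real b ^ m * x)) - \<phi> (frac (real b ^ m * y))))"
      unfolding lacunary_series_def
      by (subst suminf_diff[OF summable summable]) (simp add: right_diff_distrib)
    also have "\<bar>\<dots>\<bar> \<le> (\<Sum>m. 2 * C * \<bar>x - y\<bar> powr \<gamma> * r ^ m)"
    proof (rule norm_suminf_le[where 'a = real, unfolded real_norm_def])
      show "summable (\<lambda>m. 2 * C * \<bar>x - y\<bar> powr \<gamma> * r ^ m)"
        using r by (intro summable_mult summable_geometric) auto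
    qed (rule term_bound)
    also have "\<dots> = 2 * C / (1 - r) * \<bar>x - y\<bar> powr \<gamma>"
      using r by (simp add: suminf_mult suminf_geometric summable_geometric)
    finally show ?thesis .
  qed
  then show ?thesis
    unfolding holder_on_unit_def by blast
qed

lemma digit_increment_lacunary_series:
  fixes \<phi> :: "real \<Rightarrow> real"
  assumes digits: "\<And>i. \<omega> i < b" and "\<phi> 0 = \<phi> 1"
    and bounded: "\<forall>x\<in>{0..1}. \<bar>\<phi> x\<bar> \<le> M" and "\<bar>\<beta>\<bar> < 1"
  shows "digit_increment b (lacunary_series b \<beta> \<phi>) n \<omega>
       = (\<Sum>k<n. \<beta> ^ k * digit_increment b \<phi> (n - k) \<omega>)"
proof -
  define R where "R = real (R_digits b n \<omega>)"
  have b: "b > 0"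
    using digits[of 0] by simp
  have summable: "summable (\<lambda>m. \<beta> ^ m * \<phi> (frac (real b ^ m * t)))" for t
    using summable_lacunary_series[OF bounded \<open>\<bar>\<beta>\<bar> < 1\<close>] .
  have "\<beta> ^ k * (\<phi> (frac (real b ^ k * ((R + 1) / real b ^ n))) - \<phi> (frac (real b ^ k * (R / real b ^ n))))
      = (if k < n then \<beta> ^ k * digit_increment b \<phi> (n - k) \<omega> else 0)" (is "?term k = _") for k
  proof (cases "k < n")
    case True
    then show ?thesis
      using frac_shift_digit_increment[OF digits \<open>\<phi> 0 = \<phi> 1\<close>, of k "n - k"] by (simp add: R_def)
  next
    case False
    then have "frac (real b ^ k * ((R + 1) / real b ^ n)) = 0"
        "frac (real b ^ k * (R / real b ^ n)) = 0"
      using frac_power_mult_divide_power[OF _ b, of n k "Suc (R_digits b n \<omega>)"]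
        frac_power_mult_divide_power[OF _ b, of n k "R_digits b n \<omega>"]
      by (simp_all add: R_def add.commute)
    with False show ?thesis
      by (simp only: diff_self mult_zero_right if_False)
  qed
  note per_term = this
  have "digit_increment b (lacunary_series b \<beta> \<phi>) n \<omega> = (\<Sum>k. ?term k)"
    unfolding digit_increment_def lacunary_series_def R_def[symmetric]
    by (subst suminf_diff[OF summable summable]) (simp add: right_diff_distrib)
  also have "\<dots> = (\<Sum>k. if k < n then \<beta> ^ k * digit_increment b \<phi> (n - k) \<omega> else 0)"
    by (simp only: per_term)
  also have "\<dots> = (\<Sum>k<n. \<beta> ^ k * digit_increment b \<phi> (n - k) \<omega>)"
    by (subst suminf_finite[of "{..<n}"]) auto
  finally show ?thesis .
qed

lemma digit_increment_bound:
  fixes \<phi> :: "real \<Rightarrow> real"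
  assumes H: "\<forall>x\<in>{0..1}. \<forall>y\<in>{0..1}. \<bar>\<phi> x - \<phi> y\<bar> \<le> C * \<bar>x - y\<bar> powr \<gamma>"
    and digits: "\<And>i. \<omega> i < b"
  shows "\<bar>digit_increment b \<phi> n \<omega>\<bar> \<le> C * (real b powr - \<gamma>) ^ n"
proof -
  define r where "r = real (R_digits b n \<omega>)"
  have b: "b > 0"
    using digits[of 0] by simp
  have "R_digits b n \<omega> < b ^ n"
    using digits by (rule R_digits_less)
  then have "r + 1 \<le> real b ^ n"
    unfolding r_def by (metis Suc_leI of_nat_Suc of_nat_le_iff of_nat_power add.commute)
  then have "(r + 1) / real b ^ n \<in> {0..1}" "r / real b ^ n \<in> {0..1}"
    using b \<open>R_digits b n \<omega> < b ^ n\<close> by (simp_all add: r_def)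
  then have "\<bar>digit_increment b \<phi> n \<omega>\<bar> \<le> C * \<bar>(r + 1) / real b ^ n - r / real b ^ n\<bar> powr \<gamma>"
    using H unfolding digit_increment_def r_def by blast
  also have "\<bar>(r + 1) / real b ^ n - r / real b ^ n\<bar> = real b powr - real n"
    using b by (simp add: diff_divide_distrib[symmetric] powr_minus_divide powr_realpow)
  also have "(real b powr - real n) powr \<gamma> = (real b powr - \<gamma>) ^ n"
    using b by (simp add: powr_powr powr_power mult.commute)
  finally show ?thesis .
qed

lemma Z_var_lacunary_series:
  fixes \<phi> :: "real \<Rightarrow> real"
  assumes digits: "\<And>i. \<omega> i < b"
    and H: "\<forall>x\<in>{0..1}. \<forall>y\<in>{0..1}. \<bar>\<phi> x - \<phi> y\<bar> \<le> C * \<bar>x - y\<bar> powr \<gamma>"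
    and "\<phi> 0 = \<phi> 1" and "0 < \<gamma>"
    and "real b powr - \<gamma> < \<alpha>" and "\<bar>\<beta>\<bar> < \<alpha>" and "\<alpha> \<le> 1"
  shows "Z_var b \<alpha> (lacunary_series b \<beta> \<phi>) \<omega> = Z_var b \<alpha> \<phi> \<omega> * (\<Sum>k. (\<beta> / \<alpha>) ^ k)"
proof -
  define D where "D n = digit_increment b \<phi> n \<omega>" for n
  define a where "a i = inverse \<alpha> ^ Suc i * D (Suc i)" for i
  define c where "c l = (\<beta> / \<alpha>) ^ l" for l
  define q where "q = real b powr - \<gamma>"
  have "0 < \<alpha>"
    using assms(5) powr_ge_zero[of "real b" "- \<gamma>"] by linarith
  have summable_a: "summable (\<lambda>i. norm (a i))"
  proof (rule summable_comparison_test')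
    show "summable (\<lambda>i. \<bar>C\<bar> * (q / \<alpha>) * (q / \<alpha>) ^ i)"
      using assms(5) \<open>0 < \<alpha>\<close> by (intro summable_mult summable_geometric) (simp add: q_def)
    have "\<bar>D (Suc i)\<bar> \<le> \<bar>C\<bar> * q ^ Suc i" for i
    proof -
      have "C * q ^ Suc i \<le> \<bar>C\<bar> * q ^ Suc i"
        by (intro mult_right_mono) (auto simp: q_def)
      then show ?thesis
        using digit_increment_bound[where \<omega> = \<omega> and n = "Suc i", OF H digits] unfolding D_def q_def by linarith
    qed
    then show "norm (norm (a i)) \<le> \<bar>C\<bar> * (q / \<alpha>) * (q / \<alpha>) ^ i" for i
      using \<open>0 < \<alpha>\<close> by (simp add: a_def abs_mult divide_inverse power_mult_distrib mult_left_mono mult_ac)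
  qed
  have summable_c: "summable (\<lambda>l. norm (c l))"
    unfolding c_def norm_power using assms(6) \<open>0 < \<alpha>\<close>
    by (intro summable_geometric) (simp add: abs_divide)
  have convolution: "inverse \<alpha> ^ Suc m * (\<Sum>k<Suc m. \<beta> ^ k * D (Suc m - k)) = (\<Sum>i\<le>m. a i * c (m - i))"
    for m
  proof -
    have "(\<Sum>k<Suc m. \<beta> ^ k * D (Suc m - k))
        = (\<Sum>i<Suc m. \<beta> ^ (Suc m - Suc i) * D (Suc m - (Suc m - Suc i)))"
      by (rule sum.nat_diff_reindex[symmetric])
    also have "\<dots> = (\<Sum>i\<le>m. \<beta> ^ (m - i) * D (Suc i))"
      unfolding lessThan_Suc_atMost by (intro sum.cong) (auto simp: Suc_diff_le)
    finally have reindex: "(\<Sum>k<Suc m. \<beta> ^ k * D (Suc m - k)) = (\<Sum>i\<le>m. \<beta> ^ (m - i) * D (Suc i))" .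
    have weights: "inverse \<alpha> ^ Suc m * \<beta> ^ (m - i) = inverse \<alpha> ^ Suc i * (\<beta> / \<alpha>) ^ (m - i)"
      if "i \<le> m" for i
    proof -
      have split: "inverse \<alpha> ^ Suc m = inverse \<alpha> ^ Suc i * inverse \<alpha> ^ (m - i)"
        using that by (simp flip: power_add)
      show ?thesis
        unfolding split by (simp add: divide_inverse power_mult_distrib mult.commute)
    qed
    have "inverse \<alpha> ^ Suc m * (\<Sum>k<Suc m. \<beta> ^ k * D (Suc m - k))
        = (\<Sum>i\<le>m. inverse \<alpha> ^ Suc m * \<beta> ^ (m - i) * D (Suc i))"
      unfolding reindex by (simp add: sum_distrib_left mult.assoc)
    also have "\<dots> = (\<Sum>i\<le>m. a i * c (m - i))"
      by (intro sum.cong refl) (simp only: atMost_iff weights, simp only: a_def c_def mult_ac)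
    finally show ?thesis .
  qed
  have "\<forall>x\<in>{0..1}. \<bar>\<phi> x\<bar> \<le> \<bar>\<phi> 0\<bar> + C"
    using holder_bounded[OF H \<open>0 < \<gamma>\<close>] by blast
  then have increment: "digit_increment b (lacunary_series b \<beta> \<phi>) n \<omega> = (\<Sum>k<n. \<beta> ^ k * D (n - k))" for n
    unfolding D_def using assms(6,7) by (intro digit_increment_lacunary_series[OF digits \<open>\<phi> 0 = \<phi> 1\<close>]) auto
  have "Z_var b \<alpha> (lacunary_series b \<beta> \<phi>) \<omega> = (\<Sum>m. \<Sum>i\<le>m. a i * c (m - i))"
    unfolding Z_var_eq_suminf_digit_increment increment convolution ..
  also have "\<dots> = (\<Sum>i. a i) * (\<Sum>l. c l)"
    by (rule Cauchy_product[OF summable_a summable_c, symmetric])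
  finally show ?thesis
    by (simp add: Z_var_eq_suminf_digit_increment a_def c_def D_def)
qed

lemma lacunary_series_0_eq_1: "lacunary_series b \<beta> \<phi> 0 = lacunary_series b \<beta> \<phi> 1"
proof -
  have integer: "frac (real b ^ m) = 0" for m
    by (metis frac_eq_0_iff Ints_of_nat of_nat_power)
  show ?thesis
    by (simp add: lacunary_series_def integer)
qed

lemma AE_digit_space_digits_less:
  assumes "b > 0"
  shows "AE \<omega> in digit_space b. \<forall>i. \<omega> i < b"
  unfolding digit_space_def AE_all_countable
proof
  fix i
  have "AE x in measure_pmf (pmf_of_set {0..<b}). x < b"
    using assms by (subst AE_measure_pmf_iff) (auto simp: set_pmf_of_set)
  then show "AE \<omega> in PiM UNIV (\<lambda>_::nat. measure_pmf (pmf_of_set {0..<b})). \<omega> i < b"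
    by (intro AE_PiM_component) (auto intro: prob_space_measure_pmf)
qed

lemma AE_Z_var_lacunary_series:
  fixes \<phi> :: "real \<Rightarrow> real"
  assumes "b > 0"
    and H: "\<forall>x\<in>{0..1}. \<forall>y\<in>{0..1}. \<bar>\<phi> x - \<phi> y\<bar> \<le> C * \<bar>x - y\<bar> powr \<gamma>"
    and "\<phi> 0 = \<phi> 1" and "0 < \<gamma>"
    and "real b powr - \<gamma> < \<alpha>" and "\<bar>\<beta>\<bar> < \<alpha>" and "\<alpha> \<le> 1"
  shows "AE \<omega> in digit_space b.
           Z_var b \<alpha> (lacunary_series b \<beta> \<phi>) \<omega> = Z_var b \<alpha> \<phi> \<omega> * (\<Sum>k. (\<beta> / \<alpha>) ^ k)"
  using AE_digit_space_digits_less[OF \<open>b > 0\<close>]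
  by eventually_elim (use assms in \<open>auto intro!: Z_var_lacunary_series[OF _ H]\<close>)

theorem propositionA4:
  fixes \<phi> :: "real \<Rightarrow> real" and b :: nat and \<alpha> \<beta> \<gamma> :: real
  assumes "b \<ge> 2"
    and "0 < \<gamma>" "\<gamma> \<le> 1"
    and "holder_on_unit \<gamma> \<phi>"
    and "\<phi> 0 = \<phi> 1"
    and "real b powr (-\<gamma>) < \<alpha>" "\<alpha> < 1"
    and "valid_base_function b \<alpha> \<phi>"
    and "0 < \<beta>" "\<beta> < real b powr (-\<gamma>)"
  shows "valid_base_function b \<alpha> (\<lambda>t. \<Sum>m. \<beta> ^ m * \<phi> (frac (real b ^ m * t)))"
proof -
  obtain C where H: "\<forall>x\<in>{0..1}. \<forall>y\<in>{0..1}. \<bar>\<phi> x - \<phi> y\<bar> \<le> C * \<bar>x - y\<bar> powr \<gamma>"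
    using assms(4) unfolding holder_on_unit_def by blast
  have b: "b > 0" and "0 < real b powr \<gamma>"
    using assms(1) by simp_all
  then have "\<beta> * real b powr \<gamma> < 1" "1 < \<alpha> * real b powr \<gamma>"
    using assms(6,10) by (simp_all add: powr_minus field_simps)
  have geometric: "(\<Sum>k. (\<beta> / \<alpha>) ^ k) \<noteq> 0"
    using assms(6,9,10) by (simp add: suminf_geometric)
  have Z_eq: "AE \<omega> in digit_space b.
      Z_var b \<alpha> (lacunary_series b \<beta> \<phi>) \<omega> = Z_var b \<alpha> \<phi> \<omega> * (\<Sum>k. (\<beta> / \<alpha>) ^ k)"
    using assms by (intro AE_Z_var_lacunary_series[OF b H]) auto
  have "\<not> (AE \<omega> in digit_space b. Z_var b \<alpha> (lacunary_series b \<beta> \<phi>) \<omega> = 0)"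
  proof
    assume "AE \<omega> in digit_space b. Z_var b \<alpha> (lacunary_series b \<beta> \<phi>) \<omega> = 0"
    with Z_eq have "AE \<omega> in digit_space b. Z_var b \<alpha> \<phi> \<omega> = 0"
      by eventually_elim (use geometric in auto)
    with assms(8) show False
      unfolding valid_base_function_def by blast
  qed
  moreover have "holder_on_unit \<gamma> (lacunary_series b \<beta> \<phi>)"
    using holder_on_unit_lacunary_series[OF H] assms b \<open>\<beta> * real b powr \<gamma> < 1\<close> by simp
  ultimately have "valid_base_function b \<alpha> (lacunary_series b \<beta> \<phi>)"
    unfolding valid_base_function_def
    using assms(2,3,7) \<open>1 < \<alpha> * real b powr \<gamma>\<close> lacunary_series_0_eq_1 by blast
  then show ?thesis
    unfolding lacunary_series_def[abs_def] .
qed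

end
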